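(* Let $\zeta=e^{2\pi i/3}$ and for $(x,y,z)\in\mathbb{R}^3$ set $b=x+\zeta y+\zeta^2z$, $c=x+\zeta^2y+\zeta z$. Define $F=(F_1,F_2,F_3):\mathbb{R}^3\to\mathbb{R}^3$ by $F_1(x,y,z)=x+y+z$, $$F_2(x,y,z)=\frac{b^2}{c}+\frac{c^2}{b}=\frac{2(x^3+y^3+z^3)+12xyz-3(x^2y+y^2x+y^2z+z^2y+z^2x+x^2z)}{x^2+y^2+z^2-(xy+yz+zx)},$$ $$F_3(x,y,z)=\frac{1}{i}\Big(\frac{b^2}{c}-\frac{c^2}{b}\Big)=\frac{-3\sqrt{3}(x-y)(y-z)(z-x)}{x^2+y^2+z^2-(xy+yz+zx)},$$ when $(x,y,z)$ is not of the form $(t,t,t)$, and $F_2(t,t,t)=F_3(t,t,t)=0$. Then for all $(x,y,z),(x',y',z')\in\mathbb{R}^3$, $F(x,y,z)=F(x',y',z')$ if and only if $(x',y',z')$ is a cyclic permutation of $(x,y,z)$.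
   Context: A cyclic permutation of $(x,y,z)$ is one of $(x,y,z)$, $(y,z,x)$, $(z,x,y)$. *)

theory Defs
  imports Complex_Main
begin

definition zeta :: complex where
  "zeta = exp (2 * pi * \<i> / 3)"

definition bval :: "real \<Rightarrow> real \<Rightarrow> real \<Rightarrow> complex" where
  "bval x y z = of_real x + zeta * of_real y + zeta^2 * of_real z"

definition cval :: "real \<Rightarrow> real \<Rightarrow> real \<Rightarrow> complex" where
  "cval x y z = of_real x + zeta^2 * of_real y + zeta * of_real z"

text \<open>The map F : R^3 -> R^3. The complex expressions below are real-valued
  (c is the complex conjugate of b), so taking the real part loses nothing.\<close>
definition F :: "real \<times> real \<times> real \<Rightarrow> real \<times> real \<times> real" where
  "F p = (case p of (x, y, z) \<Rightarrow>
     (x + y + z,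
      (if x = y \<and> y = z then 0
       else Re ((bval x y z)^2 / cval x y z + (cval x y z)^2 / bval x y z)),
      (if x = y \<and> y = z then 0
       else Re ((1 / \<i>) * ((bval x y z)^2 / cval x y z - (cval x y z)^2 / bval x y z)))))"

end

theory Submission
  imports Defs
begin

text \<open>The complex number b is the discrete Fourier coefficient of (x, y, z): together with
  x + y + z it determines the triple, and a cyclic shift of the triple multiplies it by a cube
  root of unity. Since c is the conjugate of b, the last two components of F are twice the real
  and imaginary part of b^2 / cnj b = b^3 / |b|^2, which has modulus |b| and therefore
  determines b^3, i.e. b up to a cube root of unity.\<close>

lemma power3_eq_power3_iff:
  fixes a b \<omega> :: "'a :: idom"
  assumes "1 + \<omega> + \<omega>^2 = 0"
  shows "a^3 = b^3 \<longleftrightarrow> b = a \<or> b = \<omega> * a \<or> b = \<omega>^2 * a"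
proof -
  have "\<omega>^3 - 1 = (\<omega> - 1) * (1 + \<omega> + \<omega>^2)"
    by (simp add: algebra_simps power2_eq_square power3_eq_cube)
  then have "\<omega>^3 = 1"
    using assms by simp
  have "(b - a) * (b - \<omega> * a) * (b - \<omega>^2 * a)
      = b^3 - a^3 - (b - a) * ((1 + \<omega> + \<omega>^2) * a * b + (1 - \<omega>^3) * a^2)"
    by (simp add: algebra_simps power2_eq_square power3_eq_cube)
  with assms \<open>\<omega>^3 = 1\<close> have "b^3 - a^3 = (b - a) * (b - \<omega> * a) * (b - \<omega>^2 * a)"
    by simp
  then show ?thesis
    unfolding eq_commute [of "a^3"] eq_iff_diff_eq_0 [of "b^3"] by simp
qed

lemma zeta_eq_Complex: "zeta = Complex (-1/2) (sqrt 3 / 2)"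
proof -
  have "zeta = cis (2 * pi / 3)"
    unfolding zeta_def cis_conv_exp by (simp add: field_simps)
  then show ?thesis
    by (simp add: cis.ctr cos_120 sin_120)
qed

lemma zeta_squared_eq_Complex: "zeta^2 = Complex (-1/2) (- sqrt 3 / 2)"
  by (simp add: zeta_eq_Complex power2_eq_square complex_eq_iff)

lemma one_plus_zeta_plus_zeta_squared: "1 + zeta + zeta^2 = 0"
  unfolding zeta_squared_eq_Complex by (simp add: zeta_eq_Complex complex_eq_iff)

lemma bval_eq_Complex: "bval x y z = Complex (x - y/2 - z/2) (sqrt 3 / 2 * (y - z))"
  unfolding bval_def zeta_squared_eq_Complex
  by (simp add: zeta_eq_Complex complex_eq_iff algebra_simps)

lemma cval_eq_cnj_bval: "cval x y z = cnj (bval x y z)"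
  unfolding cval_def zeta_squared_eq_Complex
  by (simp add: bval_eq_Complex zeta_eq_Complex complex_eq_iff field_simps)

lemma bval_eq_0_iff: "bval x y z = 0 \<longleftrightarrow> x = y \<and> y = z"
  by (auto simp add: bval_eq_Complex complex_eq_iff)

lemma bval_rotate_left: "bval y z x = zeta^2 * bval x y z"
  unfolding bval_eq_Complex zeta_squared_eq_Complex
  by (simp add: complex_eq_iff field_simps)

lemma bval_rotate_right: "bval z x y = zeta * bval x y z"
  unfolding bval_eq_Complex zeta_eq_Complex
  by (simp add: complex_eq_iff field_simps)

lemma sum_bval_eq_iff:
  "x + y + z = x' + y' + z' \<and> bval x y z = bval x' y' z' \<longleftrightarrow> (x, y, z) = (x', y', z')"
  by (auto simp add: bval_eq_Complex complex_eq_iff)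

lemma sq_div_cnj_eq_cube_div_norm: "w^2 / cnj w = w^3 / of_real ((norm w)^2)"
proof (cases "w = 0")
  case False
  then show ?thesis
    unfolding complex_norm_square by (simp add: power2_eq_square power3_eq_cube)
qed simp

lemma norm_sq_div_cnj: "norm (w^2 / cnj w) = norm w"
  by (cases "w = 0") (simp_all add: norm_divide norm_mult power2_eq_square)

lemma sq_div_cnj_eq_iff: "w^2 / cnj w = v^2 / cnj v \<longleftrightarrow> w^3 = v^3"
proof
  assume eq: "w^2 / cnj w = v^2 / cnj v"
  then have "norm w = norm v"
    by (metis norm_sq_div_cnj)
  then show "w^3 = v^3"
    using eq by (cases "v = 0") (simp_all add: sq_div_cnj_eq_cube_div_norm)
next
  assume "w^3 = v^3"
  then have "norm w = norm v"
    by (metis norm_power power_eq_imp_eq_base norm_ge_zero zero_less_numeral)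
  with \<open>w^3 = v^3\<close> show "w^2 / cnj w = v^2 / cnj v"
    by (simp add: sq_div_cnj_eq_cube_div_norm)
qed

lemma F_eq_bval:
  "F (x, y, z) =
     (x + y + z, 2 * Re (bval x y z ^ 2 / cnj (bval x y z)), 2 * Im (bval x y z ^ 2 / cnj (bval x y z)))"
proof -
  define b where "b = bval x y z"
  define q where "q = b^2 / cnj b"
  have "cnj b ^ 2 / b = cnj q"
    by (simp add: q_def)
  moreover have "Re (q + cnj q) = 2 * Re q" and "Re (1 / \<i> * (q - cnj q)) = 2 * Im q"
    by (simp_all add: complex_add_cnj complex_diff_cnj)
  ultimately show ?thesis
    unfolding F_def cval_eq_cnj_bval bval_eq_0_iff [symmetric] prod.case
      b_def [symmetric] q_def [symmetric]
    by (simp add: q_def)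
qed

lemma F_eq_iff_sum_and_bval_cube_eq:
  "F (x, y, z) = F (x', y', z') \<longleftrightarrow>
     x + y + z = x' + y' + z' \<and> bval x y z ^ 3 = bval x' y' z' ^ 3"
  unfolding F_eq_bval prod.inject sq_div_cnj_eq_iff [symmetric]
    complex_eq_iff [of "bval x y z ^ 2 / cnj (bval x y z)"]
  by simp

theorem lemma3:
  fixes x y z x' y' z' :: real
  shows "F (x, y, z) = F (x', y', z') \<longleftrightarrow>
         ((x', y', z') = (x, y, z) \<or> (x', y', z') = (y, z, x) \<or> (x', y', z') = (z, x, y))"
proof -
  have "F (x, y, z) = F (x', y', z') \<longleftrightarrow>
      x' + y' + z' = x + y + z \<and>
      (bval x' y' z' = bval x y z \<or> bval x' y' z' = bval z x y \<or> bval x' y' z' = bval y z x)"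
    unfolding F_eq_iff_sum_and_bval_cube_eq power3_eq_power3_iff [OF one_plus_zeta_plus_zeta_squared]
    by (simp only: bval_rotate_left [where x = x and y = y and z = z]
        bval_rotate_right [where x = x and y = y and z = z] eq_commute [of "x + y + z"])
  also have "\<dots> \<longleftrightarrow> (x', y', z') = (x, y, z) \<or> (x', y', z') = (z, x, y) \<or> (x', y', z') = (y, z, x)"
    using sum_bval_eq_iff [of x' y' z' x y z] sum_bval_eq_iff [of x' y' z' z x y]
      sum_bval_eq_iff [of x' y' z' y z x]
    by (simp add: ac_simps) blast
  finally show ?thesis
    by blast
qed

end
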